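(* Let $n\geq 4$ and $G\in\mathcal{GAQ}_n$. Let $(a,b)$ be an edge of $G$, let $A$ be the set of neighbors of $a$ and $B$ the set of neighbors of $b$. Then $A\setminus\{b\}\neq B\setminus\{a\}$.
   Context: The $n$-dimensional augmented cube $AQ_n$ ($n\geq 1$) has vertex set all binary strings $u_1u_2\cdots u_n$. $AQ_1\cong K_2$ on vertices $0,1$. For $n\geq 2$, $AQ_n$ consists of a copy $AQ^0_{n-1}$ of $AQ_{n-1}$ with $0$ prefixed to every label and a copy $AQ^1_{n-1}$ with $1$ prefixed, plus the following edges: $0u_1\cdots u_{n-1}$ is adjacent to $1v_1\cdots v_{n-1}$ iff either $u_i=v_i$ for all $i$ (cross edge) or $u_i\neq v_i$ for all $i$ (complement edge). $AQ_n$ is $(2n-1)$-regular. Generalized augmented cubes: $\mathcal{GAQ}_4=\{AQ_4\}$; for $n\geq 5$, $\mathcal{GAQ}_n$ consists of all graphs $(V_1\cup V_2, E_1\cup E_2\cup M_1\cup M_2)$ where $(V_1,E_1),(V_2,E_2)$ are (vertex-disjoint copies of, possibly identical) graphs in $\mathcal{GAQ}_{n-1}$ and $M_1,M_2$ are edge-disjoint perfect matchings between $V_1$ and $V_2$. A generalized augmented cube is a graph in $\mathcal{GAQ}_n$ for some $n\geq 4$. *)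

theory Defs
  imports Main
begin

text \<open>Graphs are pairs (V, E) with E a set of 2-element subsets of V.
  Vertices of AQ_n are boolean lists of length n (True = 1, False = 0).\<close>

fun aq_adj :: "nat \<Rightarrow> bool list \<Rightarrow> bool list \<Rightarrow> bool" where
  "aq_adj 0 u v = False"
| "aq_adj (Suc 0) u v = (u \<noteq> v)"
| "aq_adj (Suc (Suc n)) (x # u) (y # v) =
     (if x = y then aq_adj (Suc n) u v else (u = v \<or> v = map Not u))"
| "aq_adj (Suc (Suc n)) _ _ = False"

definition aq_verts :: "nat \<Rightarrow> bool list set" where
  "aq_verts n = {u. length u = n}"

definition aq_edges :: "nat \<Rightarrow> bool list set set" where
  "aq_edges n = {{u, v} | u v. length u = n \<and> length v = n \<and> aq_adj n u v}"

definition graph_iso ::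
  "('a \<Rightarrow> 'b) \<Rightarrow> 'a set \<Rightarrow> 'a set set \<Rightarrow> 'b set \<Rightarrow> 'b set set \<Rightarrow> bool" where
  "graph_iso f V E V' E' \<longleftrightarrow> bij_betw f V V' \<and> E \<subseteq> Pow V \<and> (image f) ` E = E'"

definition perfect_matching_between :: "'a set \<Rightarrow> 'a set \<Rightarrow> 'a set set \<Rightarrow> bool" where
  "perfect_matching_between V1 V2 M \<longleftrightarrow>
     M \<subseteq> {{u, v} | u v. u \<in> V1 \<and> v \<in> V2} \<and>
     (\<forall>x \<in> V1 \<union> V2. \<exists>!e. e \<in> M \<and> x \<in> e)"

inductive gaq :: "nat \<Rightarrow> 'a set \<times> 'a set set \<Rightarrow> bool" where
  base: "graph_iso f V E (aq_verts 4) (aq_edges 4) \<Longrightarrow> gaq 4 (V, E)"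
| step: "\<lbrakk> gaq n (V1, E1); gaq n (V2, E2); V1 \<inter> V2 = {};
          perfect_matching_between V1 V2 M1; perfect_matching_between V1 V2 M2;
          M1 \<inter> M2 = {} \<rbrakk>
         \<Longrightarrow> gaq (Suc n) (V1 \<union> V2, E1 \<union> E2 \<union> M1 \<union> M2)"

end

theory Submission
  imports Defs
begin

text \<open>Call adjacent vertices a, b true twins if N(a) - {b} = N(b) - {a}, i.e. if no third vertex
  is adjacent to exactly one of them. AQ_4 has no true twins and minimum degree at least two, and
  both properties survive the joining step, by induction over GAQ_n. An edge inside one half is
  separated by the vertex separating it in that half. For a cross edge ab with a in the first
  half, take two neighbours x, y of a in that half: if both were adjacent to b, then b would have
  the three neighbours a, x, y across the cut, but b lies on only one edge of each matching.\<close>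

definition true_twin_free :: "'a set set \<Rightarrow> bool" where
  "true_twin_free E \<longleftrightarrow> (\<forall>a b. {a, b} \<in> E \<longrightarrow> {x. {a, x} \<in> E} - {b} \<noteq> {x. {b, x} \<in> E} - {a})"

definition min_degree_two :: "'a set \<Rightarrow> 'a set set \<Rightarrow> bool" where
  "min_degree_two V E \<longleftrightarrow> (\<forall>v \<in> V. \<exists>x y. x \<noteq> y \<and> {v, x} \<in> E \<and> {v, y} \<in> E)"

definition matching :: "'a set set \<Rightarrow> bool" where
  "matching M \<longleftrightarrow> (\<forall>e \<in> M. \<forall>e' \<in> M. e \<noteq> e' \<longrightarrow> e \<inter> e' = {})"

lemma true_twin_free_no_loop: "true_twin_free E \<Longrightarrow> {a} \<notin> E"
  unfolding true_twin_free_def by (metis insert_absorb2)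

lemma true_twin_free_iff_separating:
  "true_twin_free E \<longleftrightarrow>
     (\<forall>a b. {a, b} \<in> E \<longrightarrow> (\<exists>x. x \<noteq> a \<and> x \<noteq> b \<and> ({a, x} \<in> E \<longleftrightarrow> {b, x} \<notin> E)))"
  (is "?free \<longleftrightarrow> ?sep")
proof
  assume free: ?free
  show ?sep
  proof (intro allI impI)
    fix a b assume "{a, b} \<in> E"
    then have "{x. {a, x} \<in> E} - {b} \<noteq> {x. {b, x} \<in> E} - {a}"
      using free unfolding true_twin_free_def by simp
    then obtain x where x: "x \<in> {x. {a, x} \<in> E} - {b} \<longleftrightarrow> x \<notin> {x. {b, x} \<in> E} - {a}"
      by (meson set_eqI)
    moreover have "{a} \<notin> E" "{b} \<notin> E"
      using true_twin_free_no_loop[OF free] by blast+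
    ultimately have "x \<noteq> a" "x \<noteq> b"
      by auto
    with x show "\<exists>x. x \<noteq> a \<and> x \<noteq> b \<and> ({a, x} \<in> E \<longleftrightarrow> {b, x} \<notin> E)"
      by auto
  qed
next
  assume sep: ?sep
  show ?free
    unfolding true_twin_free_def
  proof (intro allI impI)
    fix a b assume "{a, b} \<in> E"
    then obtain x where "x \<noteq> a" "x \<noteq> b" "{a, x} \<in> E \<longleftrightarrow> {b, x} \<notin> E"
      using sep by blast
    then have "x \<in> {x. {a, x} \<in> E} - {b} \<longleftrightarrow> x \<notin> {x. {b, x} \<in> E} - {a}"
      by simp
    then show "{x. {a, x} \<in> E} - {b} \<noteq> {x. {b, x} \<in> E} - {a}"
      by blast
  qed
qed

lemma true_twin_freeI:
  "(\<And>a b. {a, b} \<in> E \<Longrightarrow> \<exists>x. x \<noteq> a \<and> x \<noteq> b \<and> ({a, x} \<in> E \<longleftrightarrow> {b, x} \<notin> E))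
    \<Longrightarrow> true_twin_free E"
  unfolding true_twin_free_iff_separating by blast

lemma true_twin_freeD:
  "true_twin_free E \<Longrightarrow> {a, b} \<in> E \<Longrightarrow> \<exists>x. x \<noteq> a \<and> x \<noteq> b \<and> ({a, x} \<in> E \<longleftrightarrow> {b, x} \<notin> E)"
  unfolding true_twin_free_iff_separating by blast

lemma graph_iso_edge_iff:
  assumes iso: "graph_iso f V E V' E'" and "x \<in> V" "y \<in> V"
  shows "{f x, f y} \<in> E' \<longleftrightarrow> {x, y} \<in> E"
proof
  assume "{f x, f y} \<in> E'"
  then obtain e where e: "e \<in> E" "f ` e = f ` {x, y}"
    using iso unfolding graph_iso_def by auto
  moreover have "e \<subseteq> V" "inj_on f V"
    using iso e(1) unfolding graph_iso_def bij_betw_def by auto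
  moreover have "{x, y} \<subseteq> V"
    using \<open>x \<in> V\<close> \<open>y \<in> V\<close> by simp
  ultimately have "e = {x, y}"
    using inj_on_image_eq_iff by metis
  with e show "{x, y} \<in> E" by simp
next
  assume "{x, y} \<in> E"
  then have "f ` {x, y} \<in> E'"
    using iso unfolding graph_iso_def by blast
  then show "{f x, f y} \<in> E'" by simp
qed

lemma graph_iso_edges_within: "graph_iso f V E V' E' \<Longrightarrow> E' \<subseteq> Pow V'"
  unfolding graph_iso_def bij_betw_def by blast

lemma true_twin_free_graph_iso:
  assumes iso: "graph_iso f V E V' E'" and free: "true_twin_free E'"
  shows "true_twin_free E"
proof (rule true_twin_freeI)
  fix a b assume ab: "{a, b} \<in> E"
  have V: "a \<in> V" "b \<in> V" "E \<subseteq> Pow V"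
    using ab iso unfolding graph_iso_def by auto
  then obtain y where y: "y \<noteq> f a" "y \<noteq> f b" "{f a, y} \<in> E' \<longleftrightarrow> {f b, y} \<notin> E'"
    using true_twin_freeD[OF free] graph_iso_edge_iff[OF iso] ab by meson
  then have "y \<in> V'"
    using graph_iso_edges_within[OF iso] by blast
  then obtain x where "x \<in> V" "y = f x"
    using iso unfolding graph_iso_def bij_betw_def by auto
  with y V show "\<exists>x. x \<noteq> a \<and> x \<noteq> b \<and> ({a, x} \<in> E \<longleftrightarrow> {b, x} \<notin> E)"
    using graph_iso_edge_iff[OF iso] by metis
qed

lemma min_degree_two_graph_iso:
  assumes iso: "graph_iso f V E V' E'" and deg: "min_degree_two V' E'"
  shows "min_degree_two V E"
  unfolding min_degree_two_def
proof
  fix v assume v: "v \<in> V"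
  have bij: "bij_betw f V V'"
    using iso unfolding graph_iso_def by blast
  then obtain y y' where y: "y \<noteq> y'" "{f v, y} \<in> E'" "{f v, y'} \<in> E'"
    using deg v bij_betwE unfolding min_degree_two_def by metis
  then have "y \<in> V'" "y' \<in> V'"
    using graph_iso_edges_within[OF iso] by blast+
  then obtain x x' where "x \<in> V" "x' \<in> V" "y = f x" "y' = f x'"
    using bij unfolding bij_betw_def by auto
  with y v show "\<exists>x y. x \<noteq> y \<and> {v, x} \<in> E \<and> {v, y} \<in> E"
    using graph_iso_edge_iff[OF iso] by metis
qed

lemma aq_adj_sym: "aq_adj n u v = aq_adj n v u"
proof (induction n u v rule: aq_adj.induct)
  case (3 n x u y v)
  have "(v = map Not u) = (u = map Not v)" by (auto simp: o_def)
  with 3 show ?case by auto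
qed auto

lemma aq_edges_iff: "{u, v} \<in> aq_edges n \<longleftrightarrow> length u = n \<and> length v = n \<and> aq_adj n u v"
  unfolding aq_edges_def by (auto simp: doubleton_eq_iff aq_adj_sym)

lemma length_4_cases:
  assumes "length u = 4"
  obtains a b c d where "u = [a, b, c, d]"
  using assms by (auto simp: length_Suc_conv numeral_eq_Suc)

definition xor_list :: "bool list \<Rightarrow> bool list \<Rightarrow> bool list" where
  "xor_list u v = map2 (\<noteq>) u v"

text \<open>AQ_4 is the Cayley graph of (Z_2)^4 with generators 1000, 0100, 0010, 0001, 0011, 0111, 1111.
  For each generator d the separator s is a generator with d \<oplus> s not a generator, so u \<oplus> s is
  adjacent to u but not to v = u \<oplus> d.\<close>

definition aq4_separator :: "bool list \<Rightarrow> bool list" where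
  "aq4_separator d =
     (if d = [True, False, False, False] then [False, True, False, False]
      else if d = [True, True, True, True] then [False, True, False, False]
      else if d = [False, True, True, True] then [False, False, True, False]
      else [True, False, False, False])"

lemma aq4_separator_separates:
  "\<forall>a b c d a' b' c' d'. aq_adj 4 [a, b, c, d] [a', b', c', d'] \<longrightarrow>
     (let w = xor_list [a, b, c, d] (aq4_separator (xor_list [a, b, c, d] [a', b', c', d'])) in
      length w = 4 \<and> w \<noteq> [a, b, c, d] \<and> w \<noteq> [a', b', c', d'] \<and>
      (aq_adj 4 [a, b, c, d] w \<longleftrightarrow> \<not> aq_adj 4 [a', b', c', d'] w))"
  unfolding all_bool_eq by (simp add: xor_list_def aq4_separator_def numeral_eq_Suc)

lemma aq4_separator_exists:
  assumes "length u = 4" "length v = 4" "aq_adj 4 u v"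
  shows "\<exists>w. length w = 4 \<and> w \<noteq> u \<and> w \<noteq> v \<and> (aq_adj 4 u w \<longleftrightarrow> \<not> aq_adj 4 v w)"
proof -
  obtain a b c d a' b' c' d' where "u = [a, b, c, d]" "v = [a', b', c', d']"
    using assms(1,2) by (elim length_4_cases)
  with assms(3) show ?thesis
    using aq4_separator_separates[rule_format, of a b c d a' b' c' d'] unfolding Let_def by auto
qed

lemma aq4_flip_neighbours:
  "aq_adj 4 [a, b, c, d] [\<not> a, b, c, d] \<and> aq_adj 4 [a, b, c, d] [a, \<not> b, c, d]"
  by (simp add: numeral_eq_Suc)

lemma true_twin_free_aq4: "true_twin_free (aq_edges 4)"
proof (rule true_twin_freeI)
  fix u v assume "{u, v} \<in> aq_edges 4"
  then have uv: "length u = 4" "length v = 4" "aq_adj 4 u v"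
    by (simp_all add: aq_edges_iff)
  then obtain w where "length w = 4" "w \<noteq> u" "w \<noteq> v" "aq_adj 4 u w \<longleftrightarrow> \<not> aq_adj 4 v w"
    using aq4_separator_exists by blast
  with uv show "\<exists>x. x \<noteq> u \<and> x \<noteq> v \<and> ({u, x} \<in> aq_edges 4 \<longleftrightarrow> {v, x} \<notin> aq_edges 4)"
    by (auto simp: aq_edges_iff)
qed

lemma min_degree_two_aq4: "min_degree_two (aq_verts 4) (aq_edges 4)"
  unfolding min_degree_two_def aq_verts_def
proof
  fix u :: "bool list" assume "u \<in> {u. length u = 4}"
  then obtain a b c d where "u = [a, b, c, d]"
    by (auto elim: length_4_cases)
  then show "\<exists>x y. x \<noteq> y \<and> {u, x} \<in> aq_edges 4 \<and> {u, y} \<in> aq_edges 4"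
    using aq4_flip_neighbours[of a b c d]
    by (intro exI[of _ "[\<not> a, b, c, d]"] exI[of _ "[a, \<not> b, c, d]"]) (simp add: aq_edges_iff)
qed

lemma perfect_matching_between_matching:
  "perfect_matching_between V1 V2 M \<Longrightarrow> matching M"
  unfolding perfect_matching_between_def matching_def by blast

lemma matching_edge_unique:
  "matching M \<Longrightarrow> e \<in> M \<Longrightarrow> e' \<in> M \<Longrightarrow> v \<in> e \<Longrightarrow> v \<in> e' \<Longrightarrow> e = e'"
  unfolding matching_def by blast

lemma union_of_two_matchings_degree_le_2:
  assumes "matching M1" "matching M2"
    and "{b, x} \<in> M1 \<union> M2" "{b, y} \<in> M1 \<union> M2" "{b, z} \<in> M1 \<union> M2"
    and "x \<noteq> y" "x \<noteq> z" "y \<noteq> z"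
  shows False
proof -
  have "{b, x} \<noteq> {b, y}" "{b, x} \<noteq> {b, z}" "{b, y} \<noteq> {b, z}"
    using assms(6-8) by (auto simp: doubleton_eq_iff)
  moreover have "b \<in> {b, x}" "b \<in> {b, y}" "b \<in> {b, z}"
    by simp_all
  ultimately show False
    using assms(3-5) matching_edge_unique[OF assms(1)] matching_edge_unique[OF assms(2)]
    by (metis Un_iff)
qed

lemma doubletons_between_commute:
  "{{u, v} | u v. u \<in> A \<and> v \<in> B} = {{u, v} | u v. u \<in> B \<and> v \<in> A}"
  by (auto simp: insert_commute)

lemma separating_vertex_induced_subgraph:
  assumes "true_twin_free E1" "E1 \<subseteq> Pow V1" "{a, b} \<in> E1"
    and induced: "\<And>x y. x \<in> V1 \<Longrightarrow> y \<in> V1 \<Longrightarrow> {x, y} \<in> E \<longleftrightarrow> {x, y} \<in> E1"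
  shows "\<exists>x. x \<noteq> a \<and> x \<noteq> b \<and> ({a, x} \<in> E \<longleftrightarrow> {b, x} \<notin> E)"
proof -
  obtain x where x: "x \<noteq> a" "x \<noteq> b" "{a, x} \<in> E1 \<longleftrightarrow> {b, x} \<notin> E1"
    using true_twin_freeD[OF assms(1,3)] by blast
  moreover have "a \<in> V1" "b \<in> V1" "x \<in> V1"
    using assms(2,3) x(3) by blast+
  ultimately show ?thesis
    using induced by metis
qed

lemma join_edge_within_side:
  assumes "E2 \<subseteq> Pow V2" "V1 \<inter> V2 = {}" "M \<subseteq> {{u, v} | u v. u \<in> V1 \<and> v \<in> V2}"
    and "E1 \<subseteq> E" "E \<subseteq> E1 \<union> E2 \<union> M" and "x \<in> V1" "y \<in> V1"
  shows "{x, y} \<in> E \<longleftrightarrow> {x, y} \<in> E1"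
proof -
  have "{x, y} \<notin> M"
  proof
    assume "{x, y} \<in> M"
    then obtain u v where "{x, y} = {u, v}" "v \<in> V2"
      using assms(3) by blast
    then have "v \<in> V1"
      using assms(6,7) by (auto simp: doubleton_eq_iff)
    with \<open>v \<in> V2\<close> assms(2) show False by blast
  qed
  moreover have "{x, y} \<notin> E2"
    using assms(1,2,6) by blast
  ultimately show ?thesis
    using assms(4,5) by blast
qed

lemma separating_vertex_cross_edge:
  assumes sub: "E1 \<subseteq> Pow V1" "E2 \<subseteq> Pow V2" and disj: "V1 \<inter> V2 = {}"
    and free: "true_twin_free E1" and deg: "min_degree_two V1 E1"
    and match: "matching M1" "matching M2"
    and ab: "a \<in> V1" "b \<in> V2" "{a, b} \<in> M1 \<union> M2"
  defines "E \<equiv> E1 \<union> E2 \<union> (M1 \<union> M2)"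
  shows "\<exists>x. x \<noteq> a \<and> x \<noteq> b \<and> ({a, x} \<in> E \<longleftrightarrow> {b, x} \<notin> E)"
proof (rule ccontr)
  assume no_sep: "\<not> ?thesis"
  obtain x y where xy: "x \<noteq> y" "{a, x} \<in> E1" "{a, y} \<in> E1"
    using deg ab(1) unfolding min_degree_two_def by blast
  have "x \<in> V1" "y \<in> V1"
    using xy sub(1) by blast+
  moreover have "x \<noteq> a" "y \<noteq> a"
    using xy true_twin_free_no_loop[OF free] by (metis insert_absorb2)+
  moreover have "x \<noteq> b" "y \<noteq> b"
    using calculation(1,2) ab(2) disj by blast+
  ultimately have "{b, x} \<in> E" "{b, y} \<in> E"
    using no_sep xy unfolding E_def by blast+
  with \<open>x \<in> V1\<close> \<open>y \<in> V1\<close> have "{b, x} \<in> M1 \<union> M2" "{b, y} \<in> M1 \<union> M2"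
    using sub disj ab(2) unfolding E_def by blast+
  moreover have "{b, a} \<in> M1 \<union> M2"
    using ab(3) by (simp add: insert_commute)
  ultimately show False
    using union_of_two_matchings_degree_le_2[OF match] xy(1) \<open>x \<noteq> a\<close> \<open>y \<noteq> a\<close> by blast
qed

lemma true_twin_free_join:
  assumes sub: "E1 \<subseteq> Pow V1" "E2 \<subseteq> Pow V2" and disj: "V1 \<inter> V2 = {}"
    and free: "true_twin_free E1" "true_twin_free E2"
    and deg: "min_degree_two V1 E1"
    and cross: "M1 \<union> M2 \<subseteq> {{u, v} | u v. u \<in> V1 \<and> v \<in> V2}"
    and match: "matching M1" "matching M2"
  shows "true_twin_free (E1 \<union> E2 \<union> (M1 \<union> M2))" (is "true_twin_free ?E")
proof (rule true_twin_freeI)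
  have disj': "V2 \<inter> V1 = {}"
    using disj by blast
  have cross': "M1 \<union> M2 \<subseteq> {{u, v} | u v. u \<in> V2 \<and> v \<in> V1}"
    using cross unfolding doubletons_between_commute .
  fix a b assume "{a, b} \<in> ?E"
  then consider "{a, b} \<in> E1" | "{a, b} \<in> E2" | "{a, b} \<in> M1 \<union> M2"
    by blast
  then show "\<exists>x. x \<noteq> a \<and> x \<noteq> b \<and> ({a, x} \<in> ?E \<longleftrightarrow> {b, x} \<notin> ?E)"
  proof cases
    case 1
    show ?thesis
      by (rule separating_vertex_induced_subgraph[OF free(1) sub(1) 1],
          rule join_edge_within_side[OF sub(2) disj cross]) auto
  next
    case 2
    show ?thesis
      by (rule separating_vertex_induced_subgraph[OF free(2) sub(2) 2],
          rule join_edge_within_side[OF sub(1) disj' cross']) auto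
  next
    case 3
    then obtain u v where uv: "{a, b} = {u, v}" "u \<in> V1" "v \<in> V2"
      using cross by blast
    have "\<exists>x. x \<noteq> u \<and> x \<noteq> v \<and> ({u, x} \<in> ?E \<longleftrightarrow> {v, x} \<notin> ?E)"
      using separating_vertex_cross_edge[OF sub disj free(1) deg match uv(2,3)] 3 uv(1)
      by simp
    with uv(1) show ?thesis
      by (auto simp: doubleton_eq_iff)
  qed
qed

lemma min_degree_two_join:
  "min_degree_two V1 E1 \<Longrightarrow> min_degree_two V2 E2 \<Longrightarrow> E1 \<union> E2 \<subseteq> E \<Longrightarrow>
    min_degree_two (V1 \<union> V2) E"
  unfolding min_degree_two_def by blast

lemma gaq_invariant:
  assumes "gaq n G"
  shows "snd G \<subseteq> Pow (fst G) \<and> min_degree_two (fst G) (snd G) \<and> true_twin_free (snd G)"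
  using assms
proof (induction rule: gaq.induct)
  case (base f V E)
  then show ?case
    using min_degree_two_graph_iso[OF base min_degree_two_aq4]
      true_twin_free_graph_iso[OF base true_twin_free_aq4]
    by (simp add: graph_iso_def)
next
  case (step n V1 E1 V2 E2 M1 M2)
  have cross: "M1 \<union> M2 \<subseteq> {{u, v} | u v. u \<in> V1 \<and> v \<in> V2}"
    using step.hyps(4,5) unfolding perfect_matching_between_def by blast
  then have "E1 \<union> E2 \<union> M1 \<union> M2 \<subseteq> Pow (V1 \<union> V2)"
    using step.IH by auto
  moreover have "min_degree_two (V1 \<union> V2) (E1 \<union> E2 \<union> M1 \<union> M2)"
    using step.IH by (intro min_degree_two_join) auto
  moreover have "true_twin_free (E1 \<union> E2 \<union> M1 \<union> M2)"
    using true_twin_free_join[OF _ _ step.hyps(3) _ _ _ cross]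
      perfect_matching_between_matching[OF step.hyps(4)]
      perfect_matching_between_matching[OF step.hyps(5)] step.IH
    by (simp add: Un_assoc)
  ultimately show ?case
    by simp
qed

theorem lemma3p1:
  fixes V :: "'a set" and E :: "'a set set" and a b :: 'a and n :: nat
  assumes "n \<ge> 4" and "gaq n (V, E)" and "{a, b} \<in> E"
  shows "{x. {a, x} \<in> E} - {b} \<noteq> {x. {b, x} \<in> E} - {a}"
  using gaq_invariant[OF assms(2)] assms(3) unfolding true_twin_free_def by simp

end
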